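(* Let $I(x,y)=U(N(x),y)$ where $U$ is a disjunctive uninorm with neutral element $e\in\,]0,1[$ and $N$ is a continuous fuzzy negation. Then the pairs $(U^*,N^* )$, with $U^*$ a disjunctive uninorm with neutral element in $]0,1[$ and $N^*$ a continuous fuzzy negation, satisfying $I(x,y)=U^*(N^*(x),y)$ for all $x,y$, are exactly the pairs $$N^*=N_I^{\alpha},\qquad U^*(x,y)=I(\mathfrak{R}_{N_I^{\alpha}}(x),y)\quad(x,y\in[0,1]),$$ where $\alpha\in\,]0,1[$ is such that the horizontal cut $N_I^\alpha=I(\cdot,\alpha)$ is a continuous fuzzy negation (and then $\alpha$ is the neutral element of $U^*$). In particular $\alpha=e$ fulfills this condition, and the representation of $I$ is unique if and only if $I(\cdot,e)$ is the only horizontal cut $I(\cdot,\alpha)$, $\alpha\in\,]0,1[$, which is a continuous fuzzy negation.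
   Context: A fuzzy negation is a non-increasing map $N:[0,1]\to[0,1]$ with $N(0)=1$, $N(1)=0$. A uninorm is a map $U:[0,1]^2\to[0,1]$ that is commutative, associative, non-decreasing in each variable, and has a neutral element $e\in[0,1]$. A uninorm is disjunctive if $U(1,0)=1$. For $\alpha\in[0,1[$, $N_I^\alpha(x)=I(x,\alpha)$. For a fuzzy negation $M$, the modified pseudo-inverse is $\mathfrak{R}_M(0)=1$ and $\mathfrak{R}_M(x)=\sup\{y\in[0,1]: M(y)>x\}$ for $x\in\,]0,1]$. *)

theory Defs
  imports Complex_Main
begin

text \<open>All functions are real-valued functions on the reals; only their behaviour
on the unit interval [0,1] is relevant.\<close>

definition fuzzy_negation :: "(real \<Rightarrow> real) \<Rightarrow> bool" where
  "fuzzy_negation N \<longleftrightarrow>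
     (\<forall>x\<in>{0..1}. N x \<in> {0..1}) \<and>
     (\<forall>x\<in>{0..1}. \<forall>y\<in>{0..1}. x \<le> y \<longrightarrow> N y \<le> N x) \<and>
     N 0 = 1 \<and> N 1 = 0"

definition continuous_fuzzy_negation :: "(real \<Rightarrow> real) \<Rightarrow> bool" where
  "continuous_fuzzy_negation N \<longleftrightarrow> fuzzy_negation N \<and> continuous_on {0..1} N"

definition uninorm :: "(real \<Rightarrow> real \<Rightarrow> real) \<Rightarrow> real \<Rightarrow> bool" where
  "uninorm U e \<longleftrightarrow>
     e \<in> {0..1} \<and>
     (\<forall>x\<in>{0..1}. \<forall>y\<in>{0..1}. U x y \<in> {0..1}) \<and>
     (\<forall>x\<in>{0..1}. \<forall>y\<in>{0..1}. U x y = U y x) \<and>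
     (\<forall>x\<in>{0..1}. \<forall>y\<in>{0..1}. \<forall>z\<in>{0..1}. U (U x y) z = U x (U y z)) \<and>
     (\<forall>x\<in>{0..1}. \<forall>x'\<in>{0..1}. \<forall>y\<in>{0..1}. x \<le> x' \<longrightarrow> U x y \<le> U x' y) \<and>
     (\<forall>x\<in>{0..1}. \<forall>y\<in>{0..1}. \<forall>y'\<in>{0..1}. y \<le> y' \<longrightarrow> U x y \<le> U x y') \<and>
     (\<forall>x\<in>{0..1}. U e x = x)"

definition disjunctive :: "(real \<Rightarrow> real \<Rightarrow> real) \<Rightarrow> bool" where
  "disjunctive U \<longleftrightarrow> U 1 0 = 1"

definition hcut :: "(real \<Rightarrow> real \<Rightarrow> real) \<Rightarrow> real \<Rightarrow> real \<Rightarrow> real" where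
  "hcut I \<alpha> = (\<lambda>x. I x \<alpha>)"

text \<open>Modified pseudo-inverse; the supremum of the empty set is taken to be 0
(the least element of [0,1]).\<close>
definition mod_pseudo_inv :: "(real \<Rightarrow> real) \<Rightarrow> real \<Rightarrow> real" where
  "mod_pseudo_inv M x =
     (if x = 0 then 1
      else if {y\<in>{0..1}. M y > x} = {} then 0
      else Sup {y\<in>{0..1}. M y > x})"

definition representation ::
  "(real \<Rightarrow> real \<Rightarrow> real) \<Rightarrow> (real \<Rightarrow> real \<Rightarrow> real) \<Rightarrow> (real \<Rightarrow> real) \<Rightarrow> bool" where
  "representation I U' N' \<longleftrightarrow>
     (\<exists>e'\<in>{0<..<1}. uninorm U' e') \<and> disjunctive U' \<and> continuous_fuzzy_negation N' \<and>
     (\<forall>x\<in>{0..1}. \<forall>y\<in>{0..1}. I x y = U' (N' x) y)"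

end

theory Submission
  imports Defs
begin

text \<open>If \<open>I(x,y) = U'(N'(x),y)\<close> and \<open>e'\<close> is the neutral element of \<open>U'\<close>, then \<open>I(x,e') = N'(x)\<close>,
so \<open>N'\<close> is the horizontal cut at \<open>e'\<close>. By the intermediate value theorem the modified
pseudo-inverse \<open>R\<close> of a continuous negation \<open>M\<close> satisfies \<open>M(R(x)) = x\<close>, hence
\<open>U'(x,y) = U'(N'(R(x)),y) = I(R(x),y)\<close>.
Conversely, if \<open>M = I(-,\<alpha>)\<close> is a continuous negation, it takes the value \<open>e\<close>, which yields
\<open>c\<close> with \<open>U(c,\<alpha>) = e\<close>. Then \<open>U(a,y) = U(c,U(U(a,\<alpha>),y))\<close>, so \<open>I(R(x),y) = U(c,U(x,y))\<close>, and
this is a disjunctive uninorm with neutral element \<open>\<alpha>\<close> representing \<open>I\<close> together with \<open>M\<close>.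
Uniqueness then reduces to the uniqueness of the neutral element of a uninorm.\<close>

lemma uninorm_neutral_in_unit: "uninorm U e \<Longrightarrow> e \<in> {0..1}"
  unfolding uninorm_def by blast

lemma uninorm_closed: "uninorm U e \<Longrightarrow> x \<in> {0..1} \<Longrightarrow> y \<in> {0..1} \<Longrightarrow> U x y \<in> {0..1}"
  unfolding uninorm_def by blast

lemma uninorm_commute: "uninorm U e \<Longrightarrow> x \<in> {0..1} \<Longrightarrow> y \<in> {0..1} \<Longrightarrow> U x y = U y x"
  unfolding uninorm_def by blast

lemma uninorm_assoc:
  "uninorm U e \<Longrightarrow> x \<in> {0..1} \<Longrightarrow> y \<in> {0..1} \<Longrightarrow> z \<in> {0..1} \<Longrightarrow> U (U x y) z = U x (U y z)"
  unfolding uninorm_def by blast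

lemma uninorm_mono_left:
  "uninorm U e \<Longrightarrow> x \<in> {0..1} \<Longrightarrow> x' \<in> {0..1} \<Longrightarrow> y \<in> {0..1} \<Longrightarrow> x \<le> x' \<Longrightarrow> U x y \<le> U x' y"
  unfolding uninorm_def by blast

lemma uninorm_mono_right:
  "uninorm U e \<Longrightarrow> x \<in> {0..1} \<Longrightarrow> y \<in> {0..1} \<Longrightarrow> y' \<in> {0..1} \<Longrightarrow> y \<le> y' \<Longrightarrow> U x y \<le> U x y'"
  unfolding uninorm_def by blast

lemma uninorm_neutral_left: "uninorm U e \<Longrightarrow> x \<in> {0..1} \<Longrightarrow> U e x = x"
  unfolding uninorm_def by blast

lemma uninorm_neutral_right: "uninorm U e \<Longrightarrow> x \<in> {0..1} \<Longrightarrow> U x e = x"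
  using uninorm_commute uninorm_neutral_left uninorm_neutral_in_unit by metis

lemma uninorm_left_commute:
  assumes U: "uninorm U e" and "x \<in> {0..1}" "y \<in> {0..1}" "z \<in> {0..1}"
  shows "U x (U y z) = U y (U x z)"
  using assms uninorm_assoc[OF U] uninorm_commute[OF U] by metis

lemma uninorm_neutral_unique:
  assumes "uninorm U e" and "uninorm U' e'" and "\<forall>x\<in>{0..1}. \<forall>y\<in>{0..1}. U x y = U' x y"
  shows "e = e'"
proof -
  have e: "e \<in> {0..1}" and e': "e' \<in> {0..1}"
    using assms(1,2) by (blast intro: uninorm_neutral_in_unit)+
  have "e' = U e e'" using assms(1) e' by (simp add: uninorm_neutral_left)
  also have "\<dots> = U' e e'" using assms(3) e e' by simp
  also have "\<dots> = e" using assms(2) e by (simp add: uninorm_neutral_right)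
  finally show ?thesis by simp
qed

lemma uninorm_cong:
  "\<forall>x\<in>{0..1}. \<forall>y\<in>{0..1}. U x y = U' x y \<Longrightarrow> uninorm U e \<Longrightarrow> uninorm U' e"
  unfolding uninorm_def by (simp (no_asm_simp)) auto

lemma uninorm_disjunctive_one_right:
  assumes "uninorm U e" and "disjunctive U" and "x \<in> {0..1}"
  shows "U x 1 = 1"
proof -
  have "1 = U 0 1" using assms(1,2) uninorm_commute[of U e 1 0] by (simp add: disjunctive_def)
  also have "\<dots> \<le> U x 1" using uninorm_mono_left[OF assms(1), of 0 x 1] assms(3) by simp
  finally show ?thesis using uninorm_closed[OF assms(1,3), of 1] by simp
qed

lemma fuzzy_negation_closed: "fuzzy_negation N \<Longrightarrow> x \<in> {0..1} \<Longrightarrow> N x \<in> {0..1}"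
  unfolding fuzzy_negation_def by blast

lemma fuzzy_negation_antimono:
  "fuzzy_negation N \<Longrightarrow> x \<in> {0..1} \<Longrightarrow> y \<in> {0..1} \<Longrightarrow> x \<le> y \<Longrightarrow> N y \<le> N x"
  unfolding fuzzy_negation_def by blast

lemma continuous_fuzzy_negation_closed:
  "continuous_fuzzy_negation N \<Longrightarrow> x \<in> {0..1} \<Longrightarrow> N x \<in> {0..1}"
  unfolding continuous_fuzzy_negation_def fuzzy_negation_def by blast

lemma continuous_fuzzy_negation_cong:
  "\<forall>x\<in>{0..1}. N x = N' x \<Longrightarrow> continuous_fuzzy_negation N \<Longrightarrow> continuous_fuzzy_negation N'"
  unfolding continuous_fuzzy_negation_def fuzzy_negation_def
  using continuous_on_cong[of "{0..1}" "{0..1}" N N'] by auto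

lemma continuous_fuzzy_negation_IVT:
  assumes "continuous_fuzzy_negation M" and "0 \<le> a" "a \<le> b" "b \<le> 1" and "M b \<le> v" "v \<le> M a"
  shows "\<exists>w\<in>{a..b}. M w = v"
proof -
  have "continuous_on {a..b} M"
    using assms(1-4) continuous_on_subset
    unfolding continuous_fuzzy_negation_def by fastforce
  then show ?thesis using IVT2'[of M b v a] assms(3,5,6) by auto
qed

lemma continuous_fuzzy_negation_mod_pseudo_inv:
  assumes M: "continuous_fuzzy_negation M" and x: "x \<in> {0..1}"
  shows "mod_pseudo_inv M x \<in> {0..1} \<and> M (mod_pseudo_inv M x) = x"
proof -
  have neg: "fuzzy_negation M" and M0: "M 0 = 1" and M1: "M 1 = 0"
    using M by (auto simp: continuous_fuzzy_negation_def fuzzy_negation_def)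
  define S where "S = {y\<in>{0..1}. M y > x}"
  consider "x = 0" | "x = 1" | "0 < x" "x < 1" using x by fastforce
  then show ?thesis
  proof cases
    case 1
    then show ?thesis by (simp add: mod_pseudo_inv_def M1)
  next
    case 2
    have "S = {}" using fuzzy_negation_closed[OF neg] 2 by (force simp: S_def)
    then show ?thesis using 2 M0 by (simp add: mod_pseudo_inv_def S_def)
  next
    case 3
    have "0 \<in> S" using M0 3 by (simp add: S_def)
    then have ne: "S \<noteq> {}" by blast
    have bdd: "bdd_above S" by (auto simp: S_def bdd_above_def)
    define s where "s = Sup S"
    have R: "mod_pseudo_inv M x = s"
      using 3 \<open>0 \<in> S\<close> unfolding mod_pseudo_inv_def S_def s_def by auto
    have "0 \<le> s" using cSup_upper[OF \<open>0 \<in> S\<close> bdd] by (simp add: s_def)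
    moreover have "s \<le> 1" unfolding s_def by (rule cSup_least[OF ne]) (simp add: S_def)
    ultimately have s: "s \<in> {0..1}" by simp
    have "x \<le> M s"
    proof (rule ccontr)
      assume "\<not> x \<le> M s"
      then obtain w where w: "w \<in> {0..s}" "M w = (M s + x) / 2"
        using continuous_fuzzy_negation_IVT[OF M, of 0 s "(M s + x) / 2"] s 3 M0 by auto
      have "y \<le> w" if y: "y \<in> S" for y
      proof (rule ccontr)
        assume "\<not> y \<le> w"
        then have "M y \<le> M w" using y w s by (intro fuzzy_negation_antimono[OF neg]) (auto simp: S_def)
        then show False using y w \<open>\<not> x \<le> M s\<close> by (simp add: S_def)
      qed
      then have "s \<le> w" unfolding s_def by (rule cSup_least[OF ne])
      then show False using w \<open>\<not> x \<le> M s\<close> by auto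
    qed
    moreover have "M s \<le> x"
    proof (rule ccontr)
      assume "\<not> M s \<le> x"
      then obtain w where w: "w \<in> {s..1}" "M w = (M s + x) / 2"
        using continuous_fuzzy_negation_IVT[OF M, of s 1 "(M s + x) / 2"] s 3 M1 by auto
      then have "w \<in> S" using s \<open>\<not> M s \<le> x\<close> by (auto simp: S_def)
      then have "w \<le> s" unfolding s_def by (rule cSup_upper[OF _ bdd])
      then show False using w \<open>\<not> M s \<le> x\<close> by auto
    qed
    ultimately show ?thesis using R s by simp
  qed
qed

lemma uninorm_cancel_shift:
  assumes U: "uninorm U e" and "U c e' = e"
    and "a \<in> {0..1}" "y \<in> {0..1}" "c \<in> {0..1}" "e' \<in> {0..1}"
  shows "U c (U (U a e') y) = U a y"
proof -
  have "U c (U a e') = U c (U e' a)" using assms by (simp add: uninorm_commute[OF U])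
  also have "\<dots> = U (U c e') a"
    using assms by (simp add: uninorm_assoc[OF U, symmetric] del: atLeastAtMost_iff)
  also have "\<dots> = a" using assms by (simp add: uninorm_neutral_left[OF U])
  finally have "U c (U a e') = a" .
  moreover have "U c (U (U a e') y) = U (U c (U a e')) y"
    using assms by (simp add: uninorm_assoc[OF U] uninorm_closed[OF U] del: atLeastAtMost_iff)
  ultimately show ?thesis by simp
qed

lemma uninorm_shift_neutral:
  assumes U: "uninorm U e" and c: "c \<in> {0..1}" and e': "e' \<in> {0..1}" and ce: "U c e' = e"
  shows "uninorm (\<lambda>x y. U c (U x y)) e'"
  unfolding uninorm_def
proof (intro conjI ballI impI)
  fix x y :: real assume x: "x \<in> {0..1}" and y: "y \<in> {0..1}"
  show "U c (U x y) \<in> {0..1}" using x y c by (intro uninorm_closed[OF U])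
  show "U c (U x y) = U c (U y x)" using x y by (simp add: uninorm_commute[OF U])
next
  fix x y z :: real assume x: "x \<in> {0..1}" and y: "y \<in> {0..1}" and z: "z \<in> {0..1}"
  have "U c (U (U c (U x y)) z) = U c (U c (U x (U y z)))"
    using x y z c by (simp add: uninorm_assoc[OF U] uninorm_closed[OF U] del: atLeastAtMost_iff)
  also have "\<dots> = U c (U x (U c (U y z)))"
    using x y z c by (simp add: uninorm_left_commute[OF U] uninorm_closed[OF U] del: atLeastAtMost_iff)
  finally show "U c (U (U c (U x y)) z) = U c (U x (U c (U y z)))" .
next
  fix x x' y :: real assume "x \<in> {0..1}" "x' \<in> {0..1}" "y \<in> {0..1}" "x \<le> x'"
  then show "U c (U x y) \<le> U c (U x' y)"
    using c by (intro uninorm_mono_right[OF U] uninorm_mono_left[OF U] uninorm_closed[OF U])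
next
  fix x y y' :: real assume "x \<in> {0..1}" "y \<in> {0..1}" "y' \<in> {0..1}" "y \<le> y'"
  then show "U c (U x y) \<le> U c (U x y')"
    using c by (intro uninorm_mono_right[OF U] uninorm_closed[OF U])
next
  fix x :: real assume x: "x \<in> {0..1}"
  show "U c (U e' x) = x"
    using x c e' ce by (simp add: uninorm_assoc[OF U, symmetric] uninorm_neutral_left[OF U])
qed (rule e')

lemma disjunctive_shift:
  assumes "uninorm U e" and "disjunctive U" and "c \<in> {0..1}"
  shows "disjunctive (\<lambda>x y. U c (U x y))"
  using assms uninorm_disjunctive_one_right by (simp add: disjunctive_def)

lemma hcut_eq_negation:
  assumes U: "uninorm U e" and N: "fuzzy_negation N"
    and I: "\<forall>x\<in>{0..1}. \<forall>y\<in>{0..1}. I x y = U (N x) y" and x: "x \<in> {0..1}"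
  shows "hcut I e x = N x"
  using I x uninorm_neutral_in_unit[OF U] fuzzy_negation_closed[OF N x]
  by (simp add: hcut_def uninorm_neutral_right[OF U] del: atLeastAtMost_iff)

lemma representation_uninorm_eq_pseudo_inv:
  assumes U: "uninorm U e" and N: "continuous_fuzzy_negation N"
    and I: "\<forall>x\<in>{0..1}. \<forall>y\<in>{0..1}. I x y = U (N x) y"
    and x: "x \<in> {0..1}" and y: "y \<in> {0..1}"
  shows "U x y = I (mod_pseudo_inv (hcut I e) x) y"
proof -
  have hN: "\<forall>x\<in>{0..1}. N x = hcut I e x"
    using hcut_eq_negation[OF U _ I] N by (simp add: continuous_fuzzy_negation_def)
  define r where "r = mod_pseudo_inv (hcut I e) x"
  have "r \<in> {0..1}" and "N r = x"
    using continuous_fuzzy_negation_mod_pseudo_inv[OF continuous_fuzzy_negation_cong[OF hN N] x] hN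
    by (simp_all add: r_def)
  then show ?thesis using I y by (simp add: r_def)
qed

lemma hcut_neutral_preimage:
  assumes U: "uninorm U e" and N: "fuzzy_negation N"
    and I: "\<forall>x\<in>{0..1}. \<forall>y\<in>{0..1}. I x y = U (N x) y"
    and \<alpha>: "\<alpha> \<in> {0..1}" and M: "continuous_fuzzy_negation (hcut I \<alpha>)"
  obtains c where "c \<in> {0..1}" and "U c \<alpha> = e"
proof -
  have M01: "hcut I \<alpha> 0 = 1" "hcut I \<alpha> 1 = 0"
    using M by (simp_all add: continuous_fuzzy_negation_def fuzzy_negation_def)
  obtain x where x: "x \<in> {0..1}" "hcut I \<alpha> x = e"
    using continuous_fuzzy_negation_IVT[OF M, of 0 1 e] M01 uninorm_neutral_in_unit[OF U] by auto
  show thesis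
  proof
    show "N x \<in> {0..1}" by (rule fuzzy_negation_closed[OF N x(1)])
    show "U (N x) \<alpha> = e" using x I \<alpha> by (simp add: hcut_def)
  qed
qed

lemma representation_of_hcut:
  assumes U: "uninorm U e" and dj: "disjunctive U" and N: "fuzzy_negation N"
    and I: "\<forall>x\<in>{0..1}. \<forall>y\<in>{0..1}. I x y = U (N x) y"
    and \<alpha>: "\<alpha> \<in> {0..1}" and M: "continuous_fuzzy_negation (hcut I \<alpha>)"
  shows "uninorm (\<lambda>x y. I (mod_pseudo_inv (hcut I \<alpha>) x) y) \<alpha>"
    and "disjunctive (\<lambda>x y. I (mod_pseudo_inv (hcut I \<alpha>) x) y)"
    and "\<forall>x\<in>{0..1}. \<forall>y\<in>{0..1}. I x y = I (mod_pseudo_inv (hcut I \<alpha>) (hcut I \<alpha> x)) y"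
proof -
  define R where "R = mod_pseudo_inv (hcut I \<alpha>)"
  have hcut: "hcut I \<alpha> x = U (N x) \<alpha>" if "x \<in> {0..1}" for x
    using I that \<alpha> by (simp add: hcut_def)
  obtain c where c: "c \<in> {0..1}" "U c \<alpha> = e" using hcut_neutral_preimage[OF U N I \<alpha> M] .
  have V_eq: "U c (U x y) = I (R x) y" if x: "x \<in> {0..1}" and y: "y \<in> {0..1}" for x y
  proof -
    have Rx: "R x \<in> {0..1}" "hcut I \<alpha> (R x) = x"
      using continuous_fuzzy_negation_mod_pseudo_inv[OF M x] by (simp_all add: R_def)
    have "U c (U x y) = U (N (R x)) y"
      using uninorm_cancel_shift[OF U c(2) fuzzy_negation_closed[OF N Rx(1)] y c(1) \<alpha>]
      by (simp add: Rx(2)[unfolded hcut[OF Rx(1)]])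
    then show ?thesis using I Rx(1) y by simp
  qed
  have "uninorm (\<lambda>x y. U c (U x y)) \<alpha>" by (rule uninorm_shift_neutral[OF U c(1) \<alpha> c(2)])
  then show "uninorm (\<lambda>x y. I (R x) y) \<alpha>" by (rule uninorm_cong[rotated]) (simp add: V_eq)
  have "disjunctive (\<lambda>x y. U c (U x y))" by (rule disjunctive_shift[OF U dj c(1)])
  then show "disjunctive (\<lambda>x y. I (R x) y)" using V_eq[of 1 0] by (simp add: disjunctive_def)
  show "\<forall>x\<in>{0..1}. \<forall>y\<in>{0..1}. I x y = I (R (hcut I \<alpha> x)) y"
  proof (intro ballI)
    fix x y :: real assume x: "x \<in> {0..1}" and y: "y \<in> {0..1}"
    have "hcut I \<alpha> x \<in> {0..1}" by (rule continuous_fuzzy_negation_closed[OF M x])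
    then have "I (R (hcut I \<alpha> x)) y = U c (U (U (N x) \<alpha>) y)" using V_eq y hcut x by simp
    also have "\<dots> = I x y"
      using uninorm_cancel_shift[OF U c(2) fuzzy_negation_closed[OF N x] y c(1) \<alpha>] I x y by simp
    finally show "I x y = I (R (hcut I \<alpha> x)) y" by simp
  qed
qed

lemma representation_iff:
  assumes U: "uninorm U e" and dj: "disjunctive U" and N: "fuzzy_negation N"
    and I: "\<forall>x\<in>{0..1}. \<forall>y\<in>{0..1}. I x y = U (N x) y"
  shows "(e' \<in> {0<..<1} \<and> uninorm U' e' \<and> disjunctive U' \<and> continuous_fuzzy_negation N' \<and>
          (\<forall>x\<in>{0..1}. \<forall>y\<in>{0..1}. I x y = U' (N' x) y))
     \<longleftrightarrow> (e' \<in> {0<..<1} \<and> continuous_fuzzy_negation (hcut I e') \<and>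
          (\<forall>x\<in>{0..1}. N' x = hcut I e' x) \<and>
          (\<forall>x\<in>{0..1}. \<forall>y\<in>{0..1}. U' x y = I (mod_pseudo_inv (hcut I e') x) y))"
    (is "?rep \<longleftrightarrow> ?cut")
proof
  assume ?rep
  then have e': "e' \<in> {0<..<1}" and U': "uninorm U' e'" and N': "continuous_fuzzy_negation N'"
    and I': "\<forall>x\<in>{0..1}. \<forall>y\<in>{0..1}. I x y = U' (N' x) y" by blast+
  have hN: "\<forall>x\<in>{0..1}. N' x = hcut I e' x"
    using hcut_eq_negation[OF U' _ I'] N' by (simp add: continuous_fuzzy_negation_def)
  have "\<forall>x\<in>{0..1}. \<forall>y\<in>{0..1}. U' x y = I (mod_pseudo_inv (hcut I e') x) y"
    using representation_uninorm_eq_pseudo_inv[OF U' N' I'] by blast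
  then show ?cut using e' hN continuous_fuzzy_negation_cong[OF hN N'] by (intro conjI)
next
  assume ?cut
  then have e': "e' \<in> {0<..<1}" and M: "continuous_fuzzy_negation (hcut I e')"
    and hN: "\<forall>x\<in>{0..1}. N' x = hcut I e' x"
    and hU: "\<forall>x\<in>{0..1}. \<forall>y\<in>{0..1}. U' x y = I (mod_pseudo_inv (hcut I e') x) y" by blast+
  have e'1: "e' \<in> {0..1}" using e' by simp
  note rep = representation_of_hcut[OF U dj N I e'1 M]
  have "uninorm U' e'" using rep(1) by (rule uninorm_cong[rotated]) (simp add: hU)
  moreover have "disjunctive U'" using rep(2) hU by (simp add: disjunctive_def)
  moreover have "continuous_fuzzy_negation N'"
    using continuous_fuzzy_negation_cong[OF _ M] hN by simp
  moreover have "\<forall>x\<in>{0..1}. \<forall>y\<in>{0..1}. I x y = U' (N' x) y"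
  proof (intro ballI)
    fix x y :: real assume x: "x \<in> {0..1}" and y: "y \<in> {0..1}"
    have "hcut I e' x \<in> {0..1}" by (rule continuous_fuzzy_negation_closed[OF M x])
    then show "I x y = U' (N' x) y" using rep(3) hU hN x y by metis
  qed
  ultimately show ?rep using e' by blast
qed

lemma representation_iff_hcut:
  assumes "uninorm U e" and "disjunctive U" and "fuzzy_negation N"
    and "\<forall>x\<in>{0..1}. \<forall>y\<in>{0..1}. I x y = U (N x) y"
  shows "representation I U' N' \<longleftrightarrow>
    (\<exists>\<alpha>\<in>{0<..<1}. continuous_fuzzy_negation (hcut I \<alpha>) \<and> (\<forall>x\<in>{0..1}. N' x = hcut I \<alpha> x) \<and>
       (\<forall>x\<in>{0..1}. \<forall>y\<in>{0..1}. U' x y = I (mod_pseudo_inv (hcut I \<alpha>) x) y))"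
proof -
  have "representation I U' N' \<longleftrightarrow>
    (\<exists>\<alpha>. \<alpha> \<in> {0<..<1} \<and> uninorm U' \<alpha> \<and> disjunctive U' \<and> continuous_fuzzy_negation N' \<and>
       (\<forall>x\<in>{0..1}. \<forall>y\<in>{0..1}. I x y = U' (N' x) y))"
    unfolding representation_def by blast
  then show ?thesis unfolding representation_iff[OF assms] Bex_def .
qed

lemma representation_unique_iff:
  assumes U: "uninorm U e" and dj: "disjunctive U" and N: "continuous_fuzzy_negation N"
    and e: "e \<in> {0<..<1}" and I: "\<forall>x\<in>{0..1}. \<forall>y\<in>{0..1}. I x y = U (N x) y"
  shows "(\<forall>U1 N1 U2 N2. representation I U1 N1 \<and> representation I U2 N2 \<longrightarrow>
            (\<forall>x\<in>{0..1}. N1 x = N2 x) \<and> (\<forall>x\<in>{0..1}. \<forall>y\<in>{0..1}. U1 x y = U2 x y))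
     \<longleftrightarrow> (\<forall>\<alpha>\<in>{0<..<1}. continuous_fuzzy_negation (hcut I \<alpha>) \<longrightarrow> \<alpha> = e)"
proof -
  have N': "fuzzy_negation N" using N by (simp add: continuous_fuzzy_negation_def)
  note hcut_rep = representation_iff_hcut[OF U dj N' I]
  show ?thesis
  proof
    assume unique: "\<forall>U1 N1 U2 N2. representation I U1 N1 \<and> representation I U2 N2 \<longrightarrow>
              (\<forall>x\<in>{0..1}. N1 x = N2 x) \<and> (\<forall>x\<in>{0..1}. \<forall>y\<in>{0..1}. U1 x y = U2 x y)"
    show "\<forall>\<alpha>\<in>{0<..<1}. continuous_fuzzy_negation (hcut I \<alpha>) \<longrightarrow> \<alpha> = e"
    proof (intro ballI impI)
      fix \<alpha> assume \<alpha>: "\<alpha> \<in> {0<..<1}" and M: "continuous_fuzzy_negation (hcut I \<alpha>)"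
      define U\<alpha> where "U\<alpha> = (\<lambda>x y. I (mod_pseudo_inv (hcut I \<alpha>) x) y)"
      have "representation I U\<alpha> (hcut I \<alpha>)" unfolding hcut_rep U\<alpha>_def using \<alpha> M by blast
      moreover have "representation I U N" unfolding representation_def using e U dj N I by blast
      ultimately have "\<forall>x\<in>{0..1}. \<forall>y\<in>{0..1}. U x y = U\<alpha> x y" using unique by blast
      moreover have "uninorm U\<alpha> \<alpha>"
        unfolding U\<alpha>_def using representation_of_hcut(1)[OF U dj N' I _ M] \<alpha> by simp
      ultimately show "\<alpha> = e" using uninorm_neutral_unique[OF U] by metis
    qed
  next
    assume only_e: "\<forall>\<alpha>\<in>{0<..<1}. continuous_fuzzy_negation (hcut I \<alpha>) \<longrightarrow> \<alpha> = e"
    have rep_e: "(\<forall>x\<in>{0..1}. N' x = hcut I e x) \<and>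
        (\<forall>x\<in>{0..1}. \<forall>y\<in>{0..1}. U' x y = I (mod_pseudo_inv (hcut I e) x) y)"
      if "representation I U' N'" for U' N'
      using that only_e unfolding hcut_rep by blast
    show "\<forall>U1 N1 U2 N2. representation I U1 N1 \<and> representation I U2 N2 \<longrightarrow>
              (\<forall>x\<in>{0..1}. N1 x = N2 x) \<and> (\<forall>x\<in>{0..1}. \<forall>y\<in>{0..1}. U1 x y = U2 x y)"
    proof (intro allI impI)
      fix U1 N1 U2 N2 assume "representation I U1 N1 \<and> representation I U2 N2"
      then show "(\<forall>x\<in>{0..1}. N1 x = N2 x) \<and> (\<forall>x\<in>{0..1}. \<forall>y\<in>{0..1}. U1 x y = U2 x y)"
        using rep_e[of U1 N1] rep_e[of U2 N2] by simp
    qed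
  qed
qed

theorem mainTheorem5:
  fixes U :: "real \<Rightarrow> real \<Rightarrow> real" and N :: "real \<Rightarrow> real"
    and I :: "real \<Rightarrow> real \<Rightarrow> real" and e :: real
  assumes "e \<in> {0<..<1}" and "uninorm U e" and "disjunctive U"
    and "continuous_fuzzy_negation N"
    and I_def: "\<And>x y. I x y = U (N x) y"
  shows
    "(\<forall>U' N' e'.
        (e' \<in> {0<..<1} \<and> uninorm U' e' \<and> disjunctive U' \<and> continuous_fuzzy_negation N' \<and>
         (\<forall>x\<in>{0..1}. \<forall>y\<in>{0..1}. I x y = U' (N' x) y))
        \<longleftrightarrow>
        (e' \<in> {0<..<1} \<and> continuous_fuzzy_negation (hcut I e') \<and>
         (\<forall>x\<in>{0..1}. N' x = hcut I e' x) \<and>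
         (\<forall>x\<in>{0..1}. \<forall>y\<in>{0..1}. U' x y = I (mod_pseudo_inv (hcut I e') x) y)))
     \<and> continuous_fuzzy_negation (hcut I e)
     \<and> ((\<forall>U1 N1 U2 N2. representation I U1 N1 \<and> representation I U2 N2 \<longrightarrow>
            (\<forall>x\<in>{0..1}. N1 x = N2 x) \<and> (\<forall>x\<in>{0..1}. \<forall>y\<in>{0..1}. U1 x y = U2 x y))
        \<longleftrightarrow> (\<forall>\<alpha>\<in>{0<..<1}. continuous_fuzzy_negation (hcut I \<alpha>) \<longrightarrow> \<alpha> = e))"
proof -
  have I: "\<forall>x\<in>{0..1}. \<forall>y\<in>{0..1}. I x y = U (N x) y" by (simp add: I_def)
  have N: "fuzzy_negation N" using assms(4) by (simp add: continuous_fuzzy_negation_def)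
  have "\<forall>x\<in>{0..1}. N x = hcut I e x" using hcut_eq_negation[OF assms(2) N I] by simp
  then have "continuous_fuzzy_negation (hcut I e)" using assms(4) by (rule continuous_fuzzy_negation_cong)
  then show ?thesis
    using representation_iff[OF assms(2,3) N I] representation_unique_iff[OF assms(2,3,4,1) I]
    by blast
qed

end
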